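(* Let $n\geq1$. The set $$\mathcal{H}_{n+1}=\Big\{h\neq0:\ h \text{ is a homogeneous harmonic polynomial on }\mathbb{R}^{n+1},\ h\text{ is }(n+2)\text{-symmetric},\ \int_{B_1}h(y)\,dy=0\Big\}$$ is nonempty, and the least degree of a polynomial $h\in\mathcal{H}_{n+1}$ equals $3$.
   Context: Fix $n+2$ points $q_1,\dots,q_{n+2}\in\mathbb{S}^n\subset\mathbb{R}^{n+1}$ spread evenly on $\mathbb{S}^n$ (vertices of an inscribed regular simplex). $\mathcal{S}_{n+2}(q)$ is the set of rotations $\phi\in SO(n+1)$ mapping $\{q_1,\dots,q_{n+2}\}$ onto itself; a function $h$ on $\mathbb{R}^{n+1}$ is $(n+2)$-symmetric if $h(\phi(y))=h(y)$ for all $y$ and all $\phi\in\mathcal{S}_{n+2}(q)$. $B_1$ is the unit ball of $\mathbb{R}^{n+1}$. *)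

theory Defs
  imports "HOL-Analysis.Analysis"
begin

text \<open>Ambient space R^(n+1) is modelled as real^'n with CARD('n) = n+1.\<close>

definition hom_poly :: "nat \<Rightarrow> (real^'n \<Rightarrow> real) \<Rightarrow> bool" where
  "hom_poly d h \<longleftrightarrow> (\<exists>c :: ('n \<Rightarrow> nat) \<Rightarrow> real. \<forall>x.
      h x = (\<Sum>\<alpha>\<in>{\<alpha>. sum \<alpha> UNIV = d}. c \<alpha> * (\<Prod>i\<in>UNIV. (x $ i) ^ (\<alpha> i))))"

definition laplacian :: "(real^'n \<Rightarrow> real) \<Rightarrow> real^'n \<Rightarrow> real" where
  "laplacian h x = (\<Sum>i\<in>UNIV. deriv (deriv (\<lambda>t. h (x + t *\<^sub>R axis i 1))) 0)"

definition harmonic :: "(real^'n \<Rightarrow> real) \<Rightarrow> bool" where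
  "harmonic h \<longleftrightarrow> (\<forall>x. laplacian h x = 0)"

definition regular_simplex_on_sphere :: "(nat \<Rightarrow> real^'n) \<Rightarrow> bool" where
  "regular_simplex_on_sphere q \<longleftrightarrow>
     (\<forall>i < CARD('n) + 1. norm (q i) = 1) \<and>
     (\<forall>i < CARD('n) + 1. \<forall>j < CARD('n) + 1. i \<noteq> j \<longrightarrow> q i \<bullet> q j = - 1 / real CARD('n))"

definition simplex_rotations :: "(nat \<Rightarrow> real^'n) \<Rightarrow> (real^'n \<Rightarrow> real^'n) set" where
  "simplex_rotations q = {\<phi>. orthogonal_transformation \<phi> \<and> det (matrix \<phi>) = 1 \<and>
      \<phi> ` (q ` {..<CARD('n) + 1}) = q ` {..<CARD('n) + 1}}"

definition simplex_symmetric :: "(nat \<Rightarrow> real^'n) \<Rightarrow> (real^'n \<Rightarrow> real) \<Rightarrow> bool" where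
  "simplex_symmetric q h \<longleftrightarrow> (\<forall>\<phi>\<in>simplex_rotations q. \<forall>y. h (\<phi> y) = h y)"

definition H_set :: "(nat \<Rightarrow> real^'n) \<Rightarrow> (real^'n \<Rightarrow> real) set" where
  "H_set q = {h. h \<noteq> (\<lambda>_. 0) \<and> (\<exists>d. hom_poly d h) \<and> harmonic h \<and>
      simplex_symmetric q h \<and> integral (ball 0 1) h = 0}"

end

theory Submission
  imports Defs
begin

text \<open>
  The witness of degree 3 is \<open>h(y) = \<Sum>\<^sub>i (q\<^sub>i \<bullet> y)\<^sup>3\<close>. Each summand has Laplacian
  \<open>6 |q\<^sub>i|\<^sup>2 (q\<^sub>i \<bullet> y)\<close>, and these add up to zero because \<open>\<Sum>\<^sub>i q\<^sub>i = 0\<close>; \<open>h\<close> is odd, so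
  its integral over the ball vanishes; it is invariant under every isometry permuting the
  vertices; and \<open>h(q\<^sub>0) = 1 - 1/m\<^sup>2 \<noteq> 0\<close>, where \<open>m = n + 1 \<ge> 2\<close> is the dimension.

  The rotations realising the 3-cycles of the vertices make a
  symmetric \<open>h\<close> constant on the vertices and on the edge sums \<open>q\<^sub>i + q\<^sub>j\<close>. A constant with zero
  mean over the ball is zero. A symmetric linear form takes one value \<open>a\<close> on the vertices and
  \<open>0 = h(\<Sum>\<^sub>i q\<^sub>i) = (m + 1) a\<close>, so it vanishes on a spanning set. For a quadratic form with
  polar form \<open>B\<close> the same facts give \<open>B(q\<^sub>i, q\<^sub>j) = 2 a (q\<^sub>i \<bullet> q\<^sub>j)\<close>, hence \<open>h(y) = a |y|\<^sup>2\<close>, and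
  harmonicity \<open>2 a m = 0\<close> forces \<open>a = 0\<close>.
\<close>

section \<open>Homogeneous polynomials\<close>

definition monomial :: "('n::finite \<Rightarrow> nat) \<Rightarrow> real^'n \<Rightarrow> real" where
  "monomial \<alpha> x = (\<Prod>i\<in>UNIV. x $ i ^ \<alpha> i)"

lemma hom_poly_iff_monomial:
  "hom_poly d h \<longleftrightarrow> (\<exists>c. \<forall>x. h x = (\<Sum>\<alpha>\<in>{\<alpha>. sum \<alpha> UNIV = d}. c \<alpha> * monomial \<alpha> x))"
  by (simp add: hom_poly_def monomial_def)

lemma finite_exponents_of_degree: "finite {\<alpha>::'n::finite \<Rightarrow> nat. sum \<alpha> UNIV = d}"
proof (rule finite_subset)
  show "{\<alpha>::'n \<Rightarrow> nat. sum \<alpha> UNIV = d} \<subseteq> PiE UNIV (\<lambda>_. {..d})"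
    by (auto simp: PiE_UNIV_domain intro!: member_le_sum)
qed (auto intro: finite_PiE)

lemma monomial_add: "monomial (\<lambda>i. \<alpha> i + \<beta> i) x = monomial \<alpha> x * monomial \<beta> x"
  by (simp add: monomial_def power_add prod.distrib)

lemma hom_poly_zero: "hom_poly d (\<lambda>_. 0)"
  unfolding hom_poly_iff_monomial by (rule exI[of _ "\<lambda>_. 0"]) simp

lemma hom_poly_one: "hom_poly 0 (\<lambda>_::real^'n. 1)"
proof -
  have "{\<alpha>::'n \<Rightarrow> nat. sum \<alpha> UNIV = 0} = {\<lambda>_. 0}"
    by (auto simp: fun_eq_iff)
  then show ?thesis
    unfolding hom_poly_iff_monomial by (intro exI[of _ "\<lambda>_. 1"]) (simp add: monomial_def)
qed

lemma hom_poly_add: "hom_poly d f \<Longrightarrow> hom_poly d g \<Longrightarrow> hom_poly d (\<lambda>x. f x + g x)"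
  unfolding hom_poly_iff_monomial
  by (elim exE, rename_tac c e, rule_tac x = "\<lambda>\<alpha>. c \<alpha> + e \<alpha>" in exI)
     (simp add: sum.distrib distrib_right)

lemma hom_poly_cmult: "hom_poly d f \<Longrightarrow> hom_poly d (\<lambda>x. r * f x)"
  unfolding hom_poly_iff_monomial
  by (elim exE, rename_tac c, rule_tac x = "\<lambda>\<alpha>. r * c \<alpha>" in exI)
     (simp add: sum_distrib_left mult.assoc)

lemma hom_poly_sum:
  "finite S \<Longrightarrow> (\<And>s. s \<in> S \<Longrightarrow> hom_poly d (f s)) \<Longrightarrow> hom_poly d (\<lambda>x. \<Sum>s\<in>S. f s x)"
  by (induction S rule: finite_induct) (auto intro: hom_poly_zero hom_poly_add)

lemma hom_poly_mult:
  assumes "hom_poly a f" "hom_poly b g"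
  shows "hom_poly (a + b) (\<lambda>x::real^'n. f x * g x)"
proof -
  let ?A = "\<lambda>d. {\<alpha>::'n \<Rightarrow> nat. sum \<alpha> UNIV = d}"
  obtain c where c: "\<And>x. f x = (\<Sum>\<alpha>\<in>?A a. c \<alpha> * monomial \<alpha> x)"
    using assms(1) unfolding hom_poly_iff_monomial by blast
  obtain e where e: "\<And>x. g x = (\<Sum>\<beta>\<in>?A b. e \<beta> * monomial \<beta> x)"
    using assms(2) unfolding hom_poly_iff_monomial by blast
  define P where "P = ?A a \<times> ?A b"
  define s where "s p = (\<lambda>i. fst p i + snd p i)" for p :: "('n \<Rightarrow> nat) \<times> ('n \<Rightarrow> nat)"
  have "finite P"
    unfolding P_def by (simp add: finite_exponents_of_degree)
  moreover have "s ` P \<subseteq> ?A (a + b)"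
    unfolding P_def s_def by (auto simp: sum.distrib)
  ultimately have group: "(\<Sum>\<gamma>\<in>?A (a + b). \<Sum>p\<in>{p\<in>P. s p = \<gamma>}. F p) = sum F P" for F
    by (rule sum.group[OF _ finite_exponents_of_degree])
  show ?thesis unfolding hom_poly_iff_monomial
  proof (intro exI allI)
    fix x
    have "f x * g x = (\<Sum>p\<in>P. c (fst p) * e (snd p) * monomial (s p) x)"
      unfolding c e sum_product sum.cartesian_product P_def
      by (intro sum.cong) (auto simp: s_def monomial_add)
    also have "\<dots> = (\<Sum>\<gamma>\<in>?A (a + b). \<Sum>p\<in>{p\<in>P. s p = \<gamma>}. c (fst p) * e (snd p) * monomial (s p) x)"
      by (rule group[symmetric])
    also have "\<dots> = (\<Sum>\<gamma>\<in>?A (a + b). (\<Sum>p\<in>{p\<in>P. s p = \<gamma>}. c (fst p) * e (snd p)) * monomial \<gamma> x)"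
      by (intro sum.cong) (simp_all add: sum_distrib_right)
    finally show "f x * g x = \<dots>" .
  qed
qed

lemma hom_poly_power: "hom_poly d f \<Longrightarrow> hom_poly (k * d) (\<lambda>x. f x ^ k)"
  by (induction k) (simp_all add: hom_poly_one hom_poly_mult)

lemma hom_poly_component: "hom_poly 1 (\<lambda>x::real^'n. x $ k)"
proof -
  define \<delta> :: "'n \<Rightarrow> nat" where "\<delta> i = (if i = k then 1 else 0)" for i
  have "monomial \<delta> x = x $ k" for x
    unfolding monomial_def \<delta>_def by (simp add: if_distrib prod.If_cases)
  moreover have "\<delta> \<in> {\<alpha>. sum \<alpha> UNIV = 1}"
    by (simp add: \<delta>_def)
  ultimately have "x $ k = (\<Sum>\<alpha>\<in>{\<alpha>. sum \<alpha> UNIV = 1}. (if \<alpha> = \<delta> then 1 else 0) * monomial \<alpha> x)"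
    for x by (simp add: sum.delta[OF finite_exponents_of_degree] if_distrib[of "\<lambda>c. c * _"]
        cong: if_cong)
  then show ?thesis
    unfolding hom_poly_iff_monomial by (intro exI[of _ "\<lambda>\<alpha>. if \<alpha> = \<delta> then 1 else 0"]) blast
qed

lemma hom_poly_inner: "hom_poly 1 (\<lambda>x::real^'n. w \<bullet> x)"
proof -
  have "hom_poly 1 (\<lambda>x::real^'n. \<Sum>i\<in>UNIV. w $ i * x $ i)"
    by (intro hom_poly_sum hom_poly_cmult hom_poly_component) simp
  then show ?thesis
    by (simp add: inner_vec_def)
qed

lemma monomial_Suc_degree:
  assumes "sum \<alpha> UNIV = Suc d"
  obtains k \<beta> where "sum \<beta> UNIV = d" "\<And>x. monomial \<alpha> x = x $ k * monomial \<beta> x"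
proof -
  obtain k where k: "\<alpha> k > 0"
    using assms by (metis gr0I sum.neutral nat.distinct(1))
  define \<beta> where "\<beta> = \<alpha>(k := \<alpha> k - 1)"
  have rest: "\<beta> i = \<alpha> i" if "i \<in> UNIV - {k}" for i
    using that by (simp add: \<beta>_def)
  have "sum \<beta> UNIV = d"
    using assms k sum.cong[OF refl rest]
    by (simp add: sum.remove[of UNIV k] \<beta>_def)
  moreover have "monomial \<alpha> x = x $ k * monomial \<beta> x" for x
  proof -
    have "\<alpha> k = Suc (\<beta> k)"
      using k by (simp add: \<beta>_def)
    moreover have "(\<Prod>i\<in>UNIV - {k}. x $ i ^ \<beta> i) = (\<Prod>i\<in>UNIV - {k}. x $ i ^ \<alpha> i)"
      by (rule prod.cong) (simp_all add: rest)
    ultimately show ?thesis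
      by (simp add: monomial_def prod.remove[of UNIV k])
  qed
  ultimately show thesis
    using that by blast
qed

lemma monomial_degree_1:
  assumes "sum \<alpha> UNIV = 1"
  obtains k where "\<And>x. monomial \<alpha> x = x $ k"
proof -
  have "sum \<alpha> UNIV = Suc 0"
    using assms by simp
  then obtain k \<beta> where "sum \<beta> UNIV = 0" "\<And>x. monomial \<alpha> x = x $ k * monomial \<beta> x"
    by (rule monomial_Suc_degree) blast
  then have "monomial \<alpha> x = x $ k" for x
    by (simp add: monomial_def)
  then show thesis
    by (rule that)
qed

lemma monomial_degree_2:
  assumes "sum \<alpha> UNIV = 2"
  obtains k l where "\<And>x. monomial \<alpha> x = x $ k * x $ l"
proof -
  have "sum \<alpha> UNIV = Suc 1"
    using assms by simp
  then obtain k \<beta> where \<beta>: "sum \<beta> UNIV = 1" and \<alpha>: "\<And>x. monomial \<alpha> x = x $ k * monomial \<beta> x"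
    by (rule monomial_Suc_degree) blast
  obtain l where "\<And>x. monomial \<beta> x = x $ l"
    using monomial_degree_1[OF \<beta>] by blast
  then show thesis
    using that[of k l] \<alpha> by simp
qed

lemma hom_poly_0_constant:
  assumes "hom_poly 0 h"
  obtains C where "h = (\<lambda>_. C)"
  using assms unfolding hom_poly_iff_monomial by (auto simp: monomial_def fun_eq_iff)

lemma hom_poly_1_linear:
  assumes "hom_poly 1 (h :: real^'n \<Rightarrow> real)"
  shows "linear h"
proof -
  let ?A = "{\<alpha>::'n \<Rightarrow> nat. sum \<alpha> UNIV = 1}"
  obtain c where c: "\<And>x. h x = (\<Sum>\<alpha>\<in>?A. c \<alpha> * monomial \<alpha> x)"
    using assms unfolding hom_poly_iff_monomial by blast
  have "\<forall>\<alpha>\<in>?A. \<exists>k. \<forall>x. monomial \<alpha> x = x $ k"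
    by (metis mem_Collect_eq monomial_degree_1)
  then obtain K where "\<And>\<alpha> x. \<alpha> \<in> ?A \<Longrightarrow> monomial \<alpha> x = x $ K \<alpha>"
    by metis
  then have "h x = (\<Sum>\<alpha>\<in>?A. c \<alpha> * x $ K \<alpha>)" for x
    unfolding c by (intro sum.cong) simp_all
  then show ?thesis
    by (intro linearI) (simp_all add: sum.distrib sum_distrib_left algebra_simps)
qed

lemma hom_poly_2_polarization:
  assumes "hom_poly 2 (h :: real^'n \<Rightarrow> real)"
  obtains B where "bilinear B" "\<And>x y. h (x + y) = h x + h y + B x y" "\<And>x. B x x = 2 * h x"
proof -
  let ?A = "{\<alpha>::'n \<Rightarrow> nat. sum \<alpha> UNIV = 2}"
  obtain c where c: "\<And>x. h x = (\<Sum>\<alpha>\<in>?A. c \<alpha> * monomial \<alpha> x)"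
    using assms unfolding hom_poly_iff_monomial by blast
  have "\<exists>kl. \<forall>x. monomial \<alpha> x = x $ fst kl * x $ snd kl" if "\<alpha> \<in> ?A" for \<alpha>
  proof -
    from that obtain k l where "\<And>x. monomial \<alpha> x = x $ k * x $ l"
      by (auto elim: monomial_degree_2)
    then show ?thesis
      by (intro exI[of _ "(k, l)"]) simp
  qed
  then obtain P where P: "\<And>\<alpha> x. \<alpha> \<in> ?A \<Longrightarrow> monomial \<alpha> x = x $ fst (P \<alpha>) * x $ snd (P \<alpha>)"
    by metis
  define K where "K \<alpha> = fst (P \<alpha>)" for \<alpha>
  define L where "L \<alpha> = snd (P \<alpha>)" for \<alpha>
  have h: "h x = (\<Sum>\<alpha>\<in>?A. c \<alpha> * (x $ K \<alpha> * x $ L \<alpha>))" for x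
    unfolding c K_def L_def by (intro sum.cong) (simp_all add: P)
  define B where "B x y = (\<Sum>\<alpha>\<in>?A. c \<alpha> * (x $ K \<alpha> * y $ L \<alpha> + y $ K \<alpha> * x $ L \<alpha>))" for x y
  have sym: "B x y = B y x" for x y
    unfolding B_def by (simp add: algebra_simps)
  have "linear (B x)" for x
    by (rule linearI) (simp_all add: B_def sum.distrib sum_distrib_left algebra_simps)
  moreover have "(\<lambda>x. B x y) = B y" for y
    using sym by blast
  ultimately have "bilinear B"
    unfolding bilinear_def by simp
  moreover have "h (x + y) = h x + h y + B x y" for x y
    unfolding h B_def by (simp add: sum.distrib[symmetric] algebra_simps)
  moreover have "B x x = 2 * h x" for x
    unfolding h B_def by (simp add: sum_distrib_left algebra_simps)
  ultimately show thesis
    by (rule that)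
qed

section \<open>Reflections and the regular simplex\<close>

definition reflection :: "'a::real_inner \<Rightarrow> 'a \<Rightarrow> 'a" where
  "reflection u x = x - (2 * (x \<bullet> u) / (u \<bullet> u)) *\<^sub>R u"

lemma linear_reflection: "linear (reflection u)"
  by (rule linearI) (simp_all add: reflection_def inner_add_left algebra_simps add_divide_distrib)

lemma orthogonal_transformation_reflection:
  assumes "u \<noteq> 0"
  shows "orthogonal_transformation (reflection u)"
proof -
  have "reflection u x \<bullet> reflection u y = x \<bullet> y" for x y
    using assms by (simp add: reflection_def inner_diff_left inner_diff_right algebra_simps
        power2_eq_square inner_commute)
  then show ?thesis
    unfolding orthogonal_transformation_def using linear_reflection by blast
qed

lemma reflection_orthogonal_fixed: "x \<bullet> u = 0 \<Longrightarrow> reflection u x = x"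
  by (simp add: reflection_def)

lemma reflection_swap:
  assumes "a \<bullet> a = b \<bullet> b"
  shows "reflection (a - b) a = b" "reflection (a - b) b = a"
proof -
  have "2 * (a \<bullet> (a - b)) = (a - b) \<bullet> (a - b)" "2 * (b \<bullet> (a - b)) = - ((a - b) \<bullet> (a - b))"
    using assms by (simp_all add: inner_diff_left inner_diff_right inner_commute)
  then show "reflection (a - b) a = b" "reflection (a - b) b = a"
    by (cases "a = b"; simp add: reflection_def)+
qed

locale regular_simplex =
  fixes q :: "nat \<Rightarrow> real^'n"
  assumes regular: "regular_simplex_on_sphere q"
begin

abbreviation vertices :: "(real^'n) set" where
  "vertices \<equiv> q ` {..<CARD('n) + 1}"

lemma inner_vertex_self: "i < CARD('n) + 1 \<Longrightarrow> q i \<bullet> q i = 1"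
  using regular unfolding regular_simplex_on_sphere_def by (metis power2_norm_eq_inner power_one)

lemma inner_vertices:
  "i < CARD('n) + 1 \<Longrightarrow> j < CARD('n) + 1 \<Longrightarrow> i \<noteq> j \<Longrightarrow> q i \<bullet> q j = - 1 / CARD('n)"
  using regular unfolding regular_simplex_on_sphere_def by blast

lemma inj_on_vertices: "inj_on q {..<CARD('n) + 1}"
proof (rule inj_onI, rule ccontr)
  fix i j assume "i \<in> {..<CARD('n) + 1}" "j \<in> {..<CARD('n) + 1}" "q i = q j" "i \<noteq> j"
  then have "1 = - 1 / real CARD('n)"
    using inner_vertex_self[of i] inner_vertices[of i j] by simp
  then show False
    by (simp add: field_simps)
qed

lemma inner_vertex_combination:
  fixes u :: "nat \<Rightarrow> real"
  assumes "I \<subseteq> {..<CARD('n) + 1}" "j \<in> I"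
  shows "real CARD('n) * (q j \<bullet> (\<Sum>i\<in>I. u i *\<^sub>R q i)) = (real CARD('n) + 1) * u j - sum u I"
proof -
  have fin: "finite I"
    using assms(1) finite_subset by blast
  have "q j \<bullet> (\<Sum>i\<in>I. u i *\<^sub>R q i) = u j * (q j \<bullet> q j) + (\<Sum>i\<in>I - {j}. u i * (q j \<bullet> q i))"
    using assms fin by (simp add: inner_add_right inner_sum_right sum.remove)
  also have "(\<Sum>i\<in>I - {j}. u i * (q j \<bullet> q i)) = (\<Sum>i\<in>I - {j}. u i) * (- 1 / CARD('n))"
    unfolding sum_distrib_right
  proof (rule sum.cong)
    fix i assume "i \<in> I - {j}"
    then show "u i * (q j \<bullet> q i) = u i * (- 1 / CARD('n))"
      using assms by (subst inner_vertices) auto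
  qed simp
  also have "(\<Sum>i\<in>I - {j}. u i) = sum u I - u j"
    using assms fin by (simp add: sum_diff1)
  also have "q j \<bullet> q j = 1"
    using assms by (intro inner_vertex_self) auto
  finally have "q j \<bullet> (\<Sum>i\<in>I. u i *\<^sub>R q i) = u j - (sum u I - u j) / CARD('n)"
    by simp
  then show ?thesis
    by (simp add: field_simps)
qed

lemma sum_vertices: "(\<Sum>i<CARD('n) + 1. q i) = 0"
proof -
  define s where "s = (\<Sum>i<CARD('n) + 1. q i)"
  have "q j \<bullet> s = 0" if "j < CARD('n) + 1" for j
    using inner_vertex_combination[of "{..<CARD('n) + 1}" j "\<lambda>_. 1"] that
    by (simp add: s_def)
  then have "(\<Sum>j<CARD('n) + 1. q j \<bullet> s) = 0"
    by simp
  then have "s \<bullet> s = 0"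
    by (subst (1) s_def) (simp only: inner_sum_left)
  then show ?thesis
    by (simp add: s_def)
qed

lemma independent_vertices: "independent (q ` {..<CARD('n)})"
proof (rule independent_if_scalars_zero)
  fix f v
  assume comb: "(\<Sum>x\<in>q ` {..<CARD('n)}. f x *\<^sub>R x) = 0" and v: "v \<in> q ` {..<CARD('n)}"
  define u where "u i = f (q i)" for i
  define T where "T = sum u {..<CARD('n)}"
  have "inj_on q {..<CARD('n)}"
    using inj_on_vertices by (rule inj_on_subset) auto
  then have "(\<Sum>i<CARD('n). u i *\<^sub>R q i) = 0"
    using comb by (simp add: sum.reindex u_def)
  then have u: "u j * (real CARD('n) + 1) = T" if "j < CARD('n)" for j
    using inner_vertex_combination[of "{..<CARD('n)}" j u] that
    by (simp add: T_def algebra_simps)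
  have "T * (real CARD('n) + 1) = (\<Sum>j<CARD('n). u j * (real CARD('n) + 1))"
    by (simp add: T_def sum_distrib_right)
  also have "\<dots> = real CARD('n) * T"
    using u by simp
  finally have "T = 0"
    by (simp add: algebra_simps)
  moreover obtain j where "j < CARD('n)" "v = q j"
    using v by blast
  ultimately show "f v = 0"
    using u[of j] by (simp add: u_def)
qed simp

lemma span_vertices: "span vertices = UNIV"
proof -
  have "inj_on q {..<CARD('n)}"
    using inj_on_vertices by (rule inj_on_subset) auto
  then have "card (q ` {..<CARD('n)}) = CARD('n)"
    by (simp add: card_image)
  then have "UNIV \<subseteq> span (q ` {..<CARD('n)})"
    by (intro card_ge_dim_independent independent_vertices) auto
  also have "\<dots> \<subseteq> span vertices"
    by (intro span_mono image_mono) auto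
  finally show ?thesis
    by blast
qed

end

definition vertex_rotation :: "(nat \<Rightarrow> 'a::real_inner) \<Rightarrow> nat \<Rightarrow> nat \<Rightarrow> nat \<Rightarrow> 'a \<Rightarrow> 'a" where
  "vertex_rotation q a b c =
     (let \<psi> = reflection (q a - q c) \<circ> reflection (q c - q b) in \<psi> \<circ> \<psi>)"

context regular_simplex
begin

lemma reflection_edge:
  assumes "i < CARD('n) + 1" "j < CARD('n) + 1" "i \<noteq> j"
  shows "reflection (q i - q j) (q i) = q j" "reflection (q i - q j) (q j) = q i"
    and "\<And>l. l < CARD('n) + 1 \<Longrightarrow> l \<noteq> i \<Longrightarrow> l \<noteq> j \<Longrightarrow> reflection (q i - q j) (q l) = q l"
    and "orthogonal_transformation (reflection (q i - q j))"
    and "reflection (q i - q j) ` vertices = vertices"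
proof -
  show swap: "reflection (q i - q j) (q i) = q j" "reflection (q i - q j) (q j) = q i"
    using assms by (simp_all add: reflection_swap inner_vertex_self)
  show fixed: "reflection (q i - q j) (q l) = q l"
    if "l < CARD('n) + 1" "l \<noteq> i" "l \<noteq> j" for l
    using assms that by (intro reflection_orthogonal_fixed) (simp add: inner_diff_right inner_vertices)
  have "q i \<noteq> q j"
    using assms inj_on_vertices by (auto dest: inj_onD)
  then show orth: "orthogonal_transformation (reflection (q i - q j))"
    by (simp add: orthogonal_transformation_reflection)
  have "reflection (q i - q j) ` vertices \<subseteq> vertices"
    using assms swap fixed by (auto simp: image_iff)
  moreover have "inj_on (reflection (q i - q j)) vertices"
    using orthogonal_transformation_inj[OF orth] by (rule inj_on_subset) simp
  ultimately show "reflection (q i - q j) ` vertices = vertices"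
    by (intro endo_inj_surj) simp_all
qed

text \<open>The map \<open>\<psi>\<close> cycles \<open>q a \<mapsto> q c \<mapsto> q b \<mapsto> q a\<close>. Squaring it gives the cycle
  \<open>q a \<mapsto> q b \<mapsto> q c \<mapsto> q a\<close> with determinant \<open>(det \<psi>)\<^sup>2 = 1\<close>, which spares computing the
  determinant of a reflection.\<close>

lemma vertex_rotation:
  assumes "a < CARD('n) + 1" "b < CARD('n) + 1" "c < CARD('n) + 1" "a \<noteq> b" "b \<noteq> c" "a \<noteq> c"
  shows "vertex_rotation q a b c (q a) = q b" "vertex_rotation q a b c (q b) = q c"
    and "vertex_rotation q a b c \<in> simplex_rotations q"
proof -
  define \<psi> where "\<psi> = reflection (q a - q c) \<circ> reflection (q c - q b)"
  have rot: "vertex_rotation q a b c = \<psi> \<circ> \<psi>"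
    by (simp add: vertex_rotation_def \<psi>_def Let_def)
  note R1 = reflection_edge[of a c] and R2 = reflection_edge[of c b]
  have "\<psi> (q a) = q c" "\<psi> (q c) = q b" "\<psi> (q b) = q a"
    using assms R1 R2 by (simp_all add: \<psi>_def)
  then show "vertex_rotation q a b c (q a) = q b" "vertex_rotation q a b c (q b) = q c"
    by (simp_all add: rot)
  have orth: "orthogonal_transformation \<psi>"
    unfolding \<psi>_def using assms R1 R2 by (intro orthogonal_transformation_compose) auto
  then have "linear \<psi>"
    by (rule orthogonal_transformation_linear)
  moreover have "det (matrix \<psi>) = 1 \<or> det (matrix \<psi>) = - 1"
    using orth by (intro det_orthogonal_matrix) (simp add: orthogonal_transformation_matrix)
  ultimately have "det (matrix (\<psi> \<circ> \<psi>)) = 1"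
    by (auto simp: matrix_compose det_mul)
  moreover have "\<psi> ` vertices = vertices"
    unfolding \<psi>_def image_comp[symmetric] using assms R1 R2 by simp
  then have "(\<psi> \<circ> \<psi>) ` vertices = vertices"
    unfolding image_comp[symmetric] by simp
  ultimately show "vertex_rotation q a b c \<in> simplex_rotations q"
    unfolding rot simplex_rotations_def by (simp add: orth orthogonal_transformation_compose)
qed

end

locale regular_simplex_dim_ge2 = regular_simplex q for q :: "nat \<Rightarrow> real^'n" +
  assumes dim_ge2: "CARD('n) \<ge> 2"
begin

lemma exists_third_vertex:
  obtains c where "c < CARD('n) + 1" "c \<noteq> a" "c \<noteq> b"
proof -
  have "\<exists>c::nat. c \<le> 2 \<and> c \<noteq> a \<and> c \<noteq> b"
    by presburger
  then obtain c :: nat where "c \<le> 2" "c \<noteq> a" "c \<noteq> b"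
    by blast
  with dim_ge2 show thesis
    by (intro that[of c]) auto
qed

lemma simplex_symmetric_vertex_eq:
  assumes "simplex_symmetric q h" "a < CARD('n) + 1" "b < CARD('n) + 1"
  shows "h (q a) = h (q b)"
proof (cases "a = b")
  case False
  obtain c where "c < CARD('n) + 1" "c \<noteq> a" "c \<noteq> b"
    by (rule exists_third_vertex)
  then have "vertex_rotation q a b c \<in> simplex_rotations q" "vertex_rotation q a b c (q a) = q b"
    using assms False vertex_rotation[of a b c] by auto
  then show ?thesis
    using assms(1) unfolding simplex_symmetric_def by metis
qed simp

lemma simplex_symmetric_edge_eq:
  assumes sym: "simplex_symmetric q h"
    and "i < CARD('n) + 1" "j < CARD('n) + 1" "k < CARD('n) + 1" "l < CARD('n) + 1"
    and "i \<noteq> j" "k \<noteq> l"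
  shows "h (q i + q j) = h (q k + q l)"
proof -
  have turn: "h (q a + q b) = h (q a + q c)"
    if "a < CARD('n) + 1" "b < CARD('n) + 1" "c < CARD('n) + 1" "a \<noteq> b" "a \<noteq> c" for a b c
  proof (cases "b = c")
    case False
    note R = vertex_rotation[of b a c]
    have "linear (vertex_rotation q b a c)"
      using that False R by (simp add: simplex_rotations_def orthogonal_transformation_linear)
    then have "vertex_rotation q b a c (q b + q a) = q a + q c"
      using that False R by (simp add: linear_add)
    moreover have "h (vertex_rotation q b a c (q b + q a)) = h (q b + q a)"
      using sym that False R unfolding simplex_symmetric_def by blast
    ultimately show ?thesis
      by (simp add: add.commute)
  qed simp
  show ?thesis
  proof (cases "i = l")
    case True
    then show ?thesis
      using assms turn[of i j k] by (simp add: add.commute)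
  next
    case False
    then show ?thesis
      using assms turn[of i j l] turn[of l i k] by (simp add: add.commute)
  qed
qed

end

section \<open>Laplacians and integrals over the ball\<close>

lemma deriv_eqI: "(\<And>t. (f has_real_derivative f' t) (at t)) \<Longrightarrow> deriv f = f'"
  by (rule ext) (rule DERIV_imp_deriv)

lemma laplacian_scaled_inner_self:
  "laplacian (\<lambda>x::real^'n. a * (x \<bullet> x)) x = 2 * a * CARD('n)"
proof -
  have "(\<lambda>t. a * ((x + t *\<^sub>R axis i 1) \<bullet> (x + t *\<^sub>R axis i 1)))
      = (\<lambda>t. a * (x \<bullet> x) + 2 * a * x $ i * t + a * t\<^sup>2)" for i
    by (rule ext)
       (simp add: inner_add_left inner_add_right inner_axis inner_axis' inner_commute
         algebra_simps power2_eq_square)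
  moreover have "deriv (\<lambda>t. a * (x \<bullet> x) + 2 * a * x $ i * t + a * t\<^sup>2) = (\<lambda>t. 2 * a * x $ i + 2 * a * t)"
    for i by (rule deriv_eqI) (auto intro!: derivative_eq_intros)
  moreover have "deriv (\<lambda>t. 2 * a * x $ i + 2 * a * t) 0 = 2 * a" for i
    by (rule DERIV_imp_deriv) (auto intro!: derivative_eq_intros)
  ultimately show ?thesis
    by (simp add: laplacian_def)
qed

lemma laplacian_sum_inner_cubes:
  fixes w :: "'l \<Rightarrow> real^'n"
  assumes "finite L"
  shows "laplacian (\<lambda>y. \<Sum>l\<in>L. (w l \<bullet> y) ^ 3) x = (\<Sum>l\<in>L. 6 * (w l \<bullet> x) * (w l \<bullet> w l))"
proof -
  have "(\<lambda>t. \<Sum>l\<in>L. (w l \<bullet> (x + t *\<^sub>R axis i 1)) ^ 3) = (\<lambda>t. \<Sum>l\<in>L. (w l \<bullet> x + t * w l $ i) ^ 3)" for i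
    by (rule ext) (simp add: inner_add_right inner_axis)
  moreover have "deriv (\<lambda>t. \<Sum>l\<in>L. (w l \<bullet> x + t * w l $ i) ^ 3)
      = (\<lambda>t. \<Sum>l\<in>L. 3 * w l $ i * (w l \<bullet> x + t * w l $ i)\<^sup>2)" for i
    by (rule deriv_eqI) (auto intro!: derivative_eq_intros simp: algebra_simps)
  moreover have "deriv (\<lambda>t. \<Sum>l\<in>L. 3 * w l $ i * (w l \<bullet> x + t * w l $ i)\<^sup>2) 0
      = (\<Sum>l\<in>L. 6 * (w l $ i)\<^sup>2 * (w l \<bullet> x))" for i
    by (rule DERIV_imp_deriv) (auto intro!: derivative_eq_intros simp: algebra_simps power2_eq_square)
  ultimately have "laplacian (\<lambda>y. \<Sum>l\<in>L. (w l \<bullet> y) ^ 3) x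
      = (\<Sum>l\<in>L. \<Sum>i\<in>UNIV. 6 * (w l $ i)\<^sup>2 * (w l \<bullet> x))"
    unfolding laplacian_def by (simp add: sum.swap[of _ UNIV])
  also have "\<dots> = (\<Sum>l\<in>L. 6 * (w l \<bullet> x) * (w l \<bullet> w l))"
  proof -
    have "(\<Sum>i\<in>UNIV. 6 * (v $ i)\<^sup>2 * c) = 6 * c * (v \<bullet> v)" for v :: "real^'n" and c
      by (simp add: inner_vec_def sum_distrib_left power2_eq_square mult_ac)
    then show ?thesis
      by simp
  qed
  finally show ?thesis .
qed

lemma integral_odd_function_eq_0:
  fixes f :: "'a::euclidean_space \<Rightarrow> 'b::banach"
  assumes "bounded S" "\<And>x. x \<in> S \<Longrightarrow> - x \<in> S" "\<And>x. f (- x) = - f x"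
  shows "integral S f = 0"
proof -
  obtain a where S: "S \<subseteq> cbox (- a) a"
    using assms(1) bounded_subset_cbox_symmetric by blast
  define g where "g x = (if x \<in> S then f x else 0)" for x
  have "g (- x) = - g x" for x
    using assms(2)[of x] assms(2)[of "- x"] assms(3) by (auto simp: g_def)
  then have "integral (cbox (- a) a) g = - integral (cbox (- a) a) g"
    using integral_reflect[of a "- a" g] by (simp add: integral_neg)
  moreover have "integral (cbox (- a) a) g = integral S f"
    unfolding g_def integral_restrict_Int using S by (simp add: Int_absorb2)
  ultimately have "integral S f + integral S f = 0"
    by (metis add.right_inverse)
  then show ?thesis
    by (simp flip: scaleR_2)
qed

lemma hom_poly_0_integral_ball_eq_0:
  assumes "hom_poly 0 h" "integral (ball (0::real^'n) 1) h = 0"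
  shows "h = (\<lambda>_. 0)"
proof -
  obtain C where h: "h = (\<lambda>_. C)"
    using assms(1) by (rule hom_poly_0_constant)
  have "integral (ball (0::real^'n) 1) (\<lambda>_. 1::real) > 0"
    using lmeasure_integral[of "ball (0::real^'n) 1"] content_ball_pos[of 1 "0::real^'n"]
    by (metis lmeasurable_ball measure_completion sets_lborel zero_less_one borel_open open_ball)
  moreover have "integral (ball (0::real^'n) 1) h = C * integral (ball (0::real^'n) 1) (\<lambda>_. 1)"
    unfolding h by (simp flip: integral_mult_right)
  ultimately show ?thesis
    using assms(2) h by simp
qed

lemma sum_inner_orthogonal_transformation:
  assumes "orthogonal_transformation \<phi>" "\<phi> ` V = V"
  shows "(\<Sum>v\<in>V. f (v \<bullet> \<phi> y)) = (\<Sum>v\<in>V. f (v \<bullet> y))"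
proof -
  have "inj_on \<phi> V"
    using orthogonal_transformation_inj[OF assms(1)] by (rule inj_on_subset) simp
  then have "(\<Sum>v\<in>\<phi> ` V. f (v \<bullet> \<phi> y)) = (\<Sum>v\<in>V. f (\<phi> v \<bullet> \<phi> y))"
    by (simp add: sum.reindex)
  then show ?thesis
    using assms unfolding orthogonal_transformation_def by simp
qed

section \<open>Symmetric harmonic polynomials of low degree\<close>

context regular_simplex_dim_ge2
begin

lemma simplex_symmetric_linear_eq_0:
  assumes lin: "linear h" and sym: "simplex_symmetric q h"
  shows "h = (\<lambda>_. 0)"
proof -
  define a where "a = h (q 0)"
  have vertex: "h (q i) = a" if "i < CARD('n) + 1" for i
    using simplex_symmetric_vertex_eq[OF sym that, of 0] by (simp add: a_def)
  have "0 = h (\<Sum>i<CARD('n) + 1. q i)"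
    unfolding sum_vertices by (simp add: linear_0[OF lin])
  also have "\<dots> = (real CARD('n) + 1) * a"
    by (simp add: linear_sum[OF lin] vertex del: sum.lessThan_Suc)
  finally have "a = 0"
    by (simp add: add_nonneg_eq_0_iff)
  then have "h x = 0" for x
    using linear_eq_0_on_span[OF lin, of vertices x] span_vertices vertex by auto
  then show ?thesis
    by auto
qed

lemma simplex_symmetric_polar_form_on_vertices:
  assumes sym: "simplex_symmetric q h" and bil: "bilinear B"
    and polar: "\<And>x y. h (x + y) = h x + h y + B x y" and diag: "\<And>x. B x x = 2 * h x"
    and "i < CARD('n) + 1" "j < CARD('n) + 1"
  shows "B (q i) (q j) = 2 * h (q 0) * (q i \<bullet> q j)"
proof -
  define a where "a = h (q 0)"
  define \<beta> where "\<beta> = B (q 0) (q 1)"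
  have one: "1 < CARD('n) + 1"
    using dim_ge2 by simp
  have vertex: "h (q i) = a" if "i < CARD('n) + 1" for i
    using simplex_symmetric_vertex_eq[OF sym that, of 0] by (simp add: a_def)
  have edge: "B (q i) (q j) = \<beta>" if "i < CARD('n) + 1" "j < CARD('n) + 1" "i \<noteq> j" for i j
  proof -
    have "h (q i + q j) = h (q 0 + q 1)"
      by (rule simplex_symmetric_edge_eq[OF sym that(1,2) _ one that(3)]) simp_all
    then show ?thesis
      unfolding polar \<beta>_def using vertex[OF that(1)] vertex[OF that(2)] vertex[OF one]
      by (simp add: a_def)
  qed
  have "0 = B (q 0) (\<Sum>j<CARD('n) + 1. q j)"
    unfolding sum_vertices using bil by (simp add: bilinear_rzero)
  also have "\<dots> = (\<Sum>j<CARD('n) + 1. B (q 0) (q j))"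
    using bil unfolding bilinear_def by (simp add: linear_sum del: sum.lessThan_Suc)
  also have "\<dots> = B (q 0) (q 0) + (\<Sum>j\<in>{..<CARD('n) + 1} - {0}. B (q 0) (q j))"
    by (intro sum.remove) auto
  also have "(\<Sum>j\<in>{..<CARD('n) + 1} - {0}. B (q 0) (q j)) = real CARD('n) * \<beta>"
    using edge by (simp del: sum.lessThan_Suc)
  finally have \<beta>_eq: "\<beta> = 2 * a * (- 1 / CARD('n))"
    by (simp add: diag a_def field_simps)
  show ?thesis
  proof (cases "i = j")
    case True
    then show ?thesis
      using assms vertex[of j] by (simp add: diag inner_vertex_self a_def)
  next
    case False
    then show ?thesis
      using assms by (simp add: edge \<beta>_eq inner_vertices a_def)
  qed
qed

lemma simplex_symmetric_quadratic:
  assumes "hom_poly 2 h" and sym: "simplex_symmetric q h"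
  shows "h = (\<lambda>x. h (q 0) * (x \<bullet> x))"
proof -
  obtain B where bil: "bilinear B" and polar: "\<And>x y. h (x + y) = h x + h y + B x y"
    and diag: "\<And>x. B x x = 2 * h x"
    by (rule hom_poly_2_polarization[OF assms(1)]) blast
  have "bilinear (\<lambda>x y. 2 * h (q 0) * (x \<bullet> y))"
    by (auto simp: bilinear_def inner_add_left inner_add_right algebra_simps intro!: linearI)
  then have "B x y = 2 * h (q 0) * (x \<bullet> y)" for x y
    using bilinear_eq[OF bil, of _ UNIV vertices UNIV vertices x y] span_vertices
      simplex_symmetric_polar_form_on_vertices[OF sym bil polar diag]
    by auto
  then show ?thesis
    using diag by simp
qed

lemma H_set_degree_ge_3:
  assumes H: "h \<in> H_set q" and "hom_poly d h"
  shows "3 \<le> d"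
proof (rule ccontr)
  assume "\<not> 3 \<le> d"
  then consider "d = 0" | "d = 1" | "d = 2"
    by linarith
  then have "h = (\<lambda>_. 0)"
  proof cases
    case 1
    then show ?thesis
      using assms hom_poly_0_integral_ball_eq_0 by (auto simp: H_set_def)
  next
    case 2
    then show ?thesis
      using assms hom_poly_1_linear simplex_symmetric_linear_eq_0 by (auto simp: H_set_def)
  next
    case 3
    then have h: "h = (\<lambda>x. h (q 0) * (x \<bullet> x))"
      using assms simplex_symmetric_quadratic by (auto simp: H_set_def)
    have "laplacian h 0 = 0"
      using H by (simp add: H_set_def harmonic_def)
    then have "h (q 0) = 0"
      by (subst (asm) h) (simp add: laplacian_scaled_inner_self)
    then show ?thesis
      by (subst h) simp
  qed
  then show False
    using H by (simp add: H_set_def)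
qed

end

section \<open>The cubic witness\<close>

definition simplex_cubic :: "(nat \<Rightarrow> real^'n) \<Rightarrow> real^'n \<Rightarrow> real" where
  "simplex_cubic q y = (\<Sum>l<CARD('n) + 1. (q l \<bullet> y) ^ 3)"

lemma hom_poly_simplex_cubic: "hom_poly 3 (simplex_cubic q)"
  using hom_poly_power[OF hom_poly_inner, of 3] unfolding simplex_cubic_def
  by (intro hom_poly_sum) auto

lemma integral_simplex_cubic: "integral (ball 0 1) (simplex_cubic q) = 0"
  by (rule integral_odd_function_eq_0) (auto simp: simplex_cubic_def sum_negf)

context regular_simplex
begin

lemma harmonic_simplex_cubic: "harmonic (simplex_cubic q)"
  unfolding harmonic_def
proof
  fix x
  have "laplacian (simplex_cubic q) x = (\<Sum>l<CARD('n) + 1. 6 * (q l \<bullet> x) * (q l \<bullet> q l))"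
    unfolding simplex_cubic_def[abs_def] by (rule laplacian_sum_inner_cubes) simp
  also have "\<dots> = 6 * ((\<Sum>l<CARD('n) + 1. q l) \<bullet> x)"
    by (simp add: inner_vertex_self inner_sum_left sum_distrib_left del: sum.lessThan_Suc)
  also have "\<dots> = 0"
    unfolding sum_vertices by simp
  finally show "laplacian (simplex_cubic q) x = 0" .
qed

lemma simplex_symmetric_simplex_cubic: "simplex_symmetric q (simplex_cubic q)"
proof -
  have cubic: "simplex_cubic q y = (\<Sum>v\<in>vertices. (v \<bullet> y) ^ 3)" for y
    unfolding simplex_cubic_def sum.reindex[OF inj_on_vertices] by simp
  show ?thesis
    unfolding simplex_symmetric_def simplex_rotations_def cubic
    by (auto intro: sum_inner_orthogonal_transformation)
qed

lemma simplex_cubic_vertex: "simplex_cubic q (q 0) = 1 - 1 / (real CARD('n))\<^sup>2"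
proof -
  have "simplex_cubic q (q 0) = (q 0 \<bullet> q 0) ^ 3 + (\<Sum>l\<in>{..<CARD('n) + 1} - {0}. (q l \<bullet> q 0) ^ 3)"
    unfolding simplex_cubic_def by (intro sum.remove) auto
  also have "\<dots> = 1 + real CARD('n) * (- 1 / real CARD('n)) ^ 3"
    by (simp add: inner_vertex_self inner_vertices)
  finally show ?thesis
    by (simp add: field_simps power2_eq_square power3_eq_cube)
qed

end

lemma (in regular_simplex_dim_ge2) simplex_cubic_in_H_set: "simplex_cubic q \<in> H_set q"
proof -
  have "real CARD('n) \<ge> 2"
    using dim_ge2 by simp
  then have "(real CARD('n))\<^sup>2 > 1"
    using mult_mono[of 2 "real CARD('n)" 2 "real CARD('n)"] by (simp add: power2_eq_square)
  then have "simplex_cubic q (q 0) \<noteq> 0"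
    by (simp add: simplex_cubic_vertex)
  then show ?thesis
    unfolding H_set_def
    using hom_poly_simplex_cubic harmonic_simplex_cubic simplex_symmetric_simplex_cubic
      integral_simplex_cubic by fastforce
qed

theorem proposition8p1:
  fixes q :: "nat \<Rightarrow> real^'n"
  assumes "CARD('n) \<ge> 2"
    and "regular_simplex_on_sphere q"
  shows "H_set q \<noteq> {} \<and> (LEAST d. \<exists>h\<in>H_set q. hom_poly d h) = 3"
proof -
  interpret regular_simplex_dim_ge2 q
    using assms by unfold_locales
  have "(LEAST d. \<exists>h\<in>H_set q. hom_poly d h) = 3"
    using simplex_cubic_in_H_set hom_poly_simplex_cubic H_set_degree_ge_3
    by (intro Least_equality) blast+
  then show ?thesis
    using simplex_cubic_in_H_set by blast
qed

end
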